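(* Let $K\ge 2$, $n\ge K$ and $1\le m\le K-1$ be integers, and let $\nu_1,\dots,\nu_K$ be probability distributions supported on $[0,1]$ with means $\mu_1>\mu_2>\cdots>\mu_K$. Let $J_1,\dots,J_m$ be the arms accepted by the SAR (Successive Accepts and Rejects) algorithm, described in the context, run on these arms with budget $n$. Then the probability of error $$e_n=\mathbb{P}\big(\{J_1,\dots,J_m\}\neq\{1,\dots,m\}\big)$$ satisfies $$e_n\le 2K^2\exp\left(-\frac{n-K}{8\,\overline{\log}(K)\,H_2^{\langle m\rangle}}\right),$$ where $\overline{\log}(K)=\frac12+\sum_{i=2}^K\frac1i$.
   Context: Bandit model ($m$-best arms identification). There are $K$ arms, and arm $i$ has an unknown distribution $\nu_i$ on $[0,1]$ with mean $\mu_i$. At each round $t=1,\dots,n$ the agent chooses an arm $I_t$ (possibly depending on past observations) and observes a reward drawn from $\nu_{I_t}$, independently of the past given $I_t$. Write $X_{i,1},X_{i,2},\dots$ for the successive rewards obtained from arm $i$, and $\widehat\mu_{i,s}=\frac1s\sum_{t=1}^sX_{i,t}$ for the empirical mean of arm $i$ after $s$ pulls. Gaps and complexity. Define $\Delta_i^{\langle m\rangle}=\mu_i-\mu_{m+1}$ if $i\le m$, and $\Delta_i^{\langle m\rangle}=\mu_m-\mu_i$ if $i>m$. Let $(1),\dots,(K)$ be an ordering of $\{1,\dots,K\}$ such that $\Delta_{(1)}^{\langle m\rangle}\le\cdots\le\Delta_{(K)}^{\langle m\rangle}$, and set $H_2^{\langle m\rangle}=\max_{i\in\{1,\dots,K\}}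 i\,\big(\Delta_{(i)}^{\langle m\rangle}\big)^{-2}$. SAR algorithm. Let $A_1=\{1,\dots,K\}$, $m(1)=m$, $\overline{\log}(K)=\frac12+\sum_{i=2}^K\frac1i$, $n_0=0$, and for $k\in\{1,\dots,K-1\}$ let $n_k=\left\lceil\frac{1}{\overline{\log}(K)}\frac{n-K}{K+1-k}\right\rceil$. For each phase $k=1,\dots,K-1$: (1) Pull each active arm $i\in A_k$ exactly $n_k-n_{k-1}$ times (so that afterwards every arm of $A_k$ has been pulled $n_k$ times in total). (2) Let $\sigma_k:\{1,\dots,K+1-k\}\to A_k$ be a bijection with $\widehat\mu_{\sigma_k(1),n_k}\ge\widehat\mu_{\sigma_k(2),n_k}\ge\cdots\ge\widehat\mu_{\sigma_k(K+1-k),n_k}$. For $1\le r\le K+1-k$ define the empirical gaps $\widehat\Delta_{\sigma_k(r),n_k}=\widehat\mu_{\sigma_k(r),n_k}-\widehat\mu_{\sigma_k(m(k)+1),n_k}$ if $r\le m(k)$, and $\widehat\Delta_{\sigma_k(r),n_k}=\widehat\mu_{\sigma_k(m(k)),n_k}-\widehat\mu_{\sigma_k(r),n_k}$ if $r\ge m(k)+1$. (3) Let $i_k\in\arg\max_{i\in A_k}\widehat\Delta_{i,n_k}$ (ties broken arbitrarily) and deactivate it: $A_{k+1}=A_k\setminus\{i_k\}$. (4) If $\widehat\mu_{i_k,n_k}>\widehat\mu_{\sigma_k(m(k)+1),n_k}$, arm $i_k$ is accepted: set $m(k+1)=m(k)-1$ and $J_{m-m(k+1)}=i_k$; otherwise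 $i_k$ is rejected and $m(k+1)=m(k)$. Output: the accepted arms $J_1,\dots,J_m$. *)

theory Defs
  imports "HOL-Probability.Probability"
begin

definition logbar :: "nat \<Rightarrow> real" where
  "logbar K = 1/2 + (\<Sum>i=2..K. 1 / real i)"

definition nk :: "nat \<Rightarrow> nat \<Rightarrow> nat \<Rightarrow> nat" where
  "nk K n k = (if k = 0 then 0
     else nat \<lceil>(1 / logbar K) * ((real n - real K) / real (K + 1 - k))\<rceil>)"

definition gapm :: "(nat \<Rightarrow> real) \<Rightarrow> nat \<Rightarrow> nat \<Rightarrow> real" where
  "gapm \<mu> m i = (if i \<le> m then \<mu> i - \<mu> (m + 1) else \<mu> m - \<mu> i)"

definition H2 :: "nat \<Rightarrow> (nat \<Rightarrow> real) \<Rightarrow> nat \<Rightarrow> real" where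
  "H2 K \<mu> m = Max ((\<lambda>i. real i / (sort (map (gapm \<mu> m) [1..<K+1]) ! (i - 1))\<^sup>2) ` {1..K})"

text \<open>Empirical mean of arm i after s pulls, from the reward table X i t.\<close>
definition emp_mean :: "(nat \<Rightarrow> nat \<Rightarrow> 'a \<Rightarrow> real) \<Rightarrow> 'a \<Rightarrow> nat \<Rightarrow> nat \<Rightarrow> real" where
  "emp_mean X \<omega> i s = (\<Sum>t=1..s. X i t \<omega>) / real s"

text \<open>One phase k of SAR, state = (active set A_k, m(k), set of accepted arms).
  All tie-breaking (choice of sigma_k and of i_k) is existential.
  Convention for degenerate positions: the value at rank 0 is +infinity and the
  value at rank card A + 1 is -infinity.\<close>
definition sar_step :: "nat \<Rightarrow> nat \<Rightarrow> (nat \<Rightarrow> nat \<Rightarrow> 'a \<Rightarrow> real) \<Rightarrow> 'a \<Rightarrow> nat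
    \<Rightarrow> nat set \<times> nat \<times> nat set \<Rightarrow> nat set \<times> nat \<times> nat set \<Rightarrow> bool" where
  "sar_step K n X \<omega> k st st' \<longleftrightarrow>
     (case st of (A, mm, Acc) \<Rightarrow>
       (let mu = (\<lambda>i. emp_mean X \<omega> i (nk K n k)); c = card A in
        \<exists>\<sigma> i. bij_betw \<sigma> {1..c} A
          \<and> (\<forall>r\<in>{1..c}. \<forall>r'\<in>{1..c}. r \<le> r' \<longrightarrow> mu (\<sigma> r') \<le> mu (\<sigma> r))
          \<and> (let val = (\<lambda>r. if r = 0 then PInfty else if c < r then MInfty else ereal (mu (\<sigma> r)));
                 gap = (\<lambda>j. let r = inv_into {1..c} \<sigma> j in
                          if r \<le> mm then val r - val (mm + 1) else val mm - val r)
             in i \<in> A \<and> (\<forall>j\<in>A. gap j \<le> gap i)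
                \<and> st' = (if val (mm + 1) < ereal (mu i)
                         then (A - {i}, mm - 1, insert i Acc)
                         else (A - {i}, mm, Acc)))))"

text \<open>All possible outputs (sets of accepted arms) of SAR on outcome omega,
  over all admissible tie-breakings. If after the K-1 phases the remaining
  arm still has to be accepted (m(K) = |A_K|) it is accepted.\<close>
definition sar_outputs :: "nat \<Rightarrow> nat \<Rightarrow> nat \<Rightarrow> (nat \<Rightarrow> nat \<Rightarrow> 'a \<Rightarrow> real) \<Rightarrow> 'a \<Rightarrow> nat set set" where
  "sar_outputs K m n X \<omega> = {out. \<exists>st. st 1 = ({1..K}, m, {})
      \<and> (\<forall>k\<in>{1..K-1}. sar_step K n X \<omega> k (st k) (st (Suc k)))
      \<and> out = (case st K of (A, mm, Acc) \<Rightarrow> if mm = card A then Acc \<union> A else Acc)}"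

definition sar_error_event :: "'a measure \<Rightarrow> nat \<Rightarrow> nat \<Rightarrow> nat \<Rightarrow> (nat \<Rightarrow> nat \<Rightarrow> 'a \<Rightarrow> real) \<Rightarrow> 'a set" where
  "sar_error_event M K m n X = {\<omega>\<in>space M. \<exists>out\<in>sar_outputs K m n X \<omega>. out \<noteq> {1..m}}"

end

theory Submission
  imports Defs
begin

(* Idea: in phase k there are K + 1 - k active arms, but at most K - k arms have gap smaller
   than Delta_(K+1-k), so some active arm has gap at least Delta_(K+1-k). If every active empirical mean lies within
   delta = Delta_(K+1-k)/4 of its mean, that arm has empirical gap greater than 2 delta, while any
   arm that SAR would misclassify has empirical gap less than 2 delta; hence the arm with maximal
   empirical gap is classified correctly, and by induction over the phases SAR returns {1..m}.
   Hoeffding's inequality bounds the probability that a given arm is inaccurate in a given phase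
   by 2 exp(-n_k Delta_(K+1-k)^2 / 8), and n_k Delta_(K+1-k)^2 >= (n - K) / (logbar K * H_2);
   a union bound over the K (K - 1) pairs (phase, arm) concludes. *)

section \<open>Sorted enumerations and empirical gaps\<close>

lemma card_eq_diffs_nonempty:
  assumes "finite S" "finite T" "card S = card T" "S \<noteq> T"
  shows "S - T \<noteq> {}" and "T - S \<noteq> {}"
  using assms card_subset_eq by (metis Diff_eq_empty_iff)+

definition ranked_value :: "nat \<Rightarrow> ('a \<Rightarrow> real) \<Rightarrow> (nat \<Rightarrow> 'a) \<Rightarrow> nat \<Rightarrow> ereal" where
  "ranked_value c f \<sigma> r = (if r = 0 then PInfty else if c < r then MInfty else ereal (f (\<sigma> r)))"

definition ranked_gap :: "nat \<Rightarrow> nat \<Rightarrow> ('a \<Rightarrow> real) \<Rightarrow> (nat \<Rightarrow> 'a) \<Rightarrow> 'a \<Rightarrow> ereal" where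
  "ranked_gap c mm f \<sigma> j = (let r = inv_into {1..c} \<sigma> j in
     if r \<le> mm then ranked_value c f \<sigma> r - ranked_value c f \<sigma> (mm + 1)
     else ranked_value c f \<sigma> mm - ranked_value c f \<sigma> r)"

locale sorted_enum =
  fixes A :: "'a set" and \<sigma> :: "nat \<Rightarrow> 'a" and f :: "'a \<Rightarrow> real"
  assumes bij: "bij_betw \<sigma> {1..card A} A"
    and sorted: "\<forall>r\<in>{1..card A}. \<forall>r'\<in>{1..card A}. r \<le> r' \<longrightarrow> f (\<sigma> r') \<le> f (\<sigma> r)"
begin

definition rank :: "'a \<Rightarrow> nat" where
  "rank j = inv_into {1..card A} \<sigma> j"

lemma finite_A: "finite A"
  using bij_betw_finite[OF bij] by simp

lemma rank_in: "j \<in> A \<Longrightarrow> rank j \<in> {1..card A}"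
  unfolding rank_def using bij by (metis bij_betw_def inv_into_into)

lemma sigma_rank: "j \<in> A \<Longrightarrow> \<sigma> (rank j) = j"
  unfolding rank_def using bij by (metis bij_betw_def f_inv_into_f)

lemma rank_sigma: "r \<in> {1..card A} \<Longrightarrow> rank (\<sigma> r) = r"
  unfolding rank_def using bij by (simp add: bij_betw_def)

lemma sigma_in: "r \<in> {1..card A} \<Longrightarrow> \<sigma> r \<in> A"
  using bij by (auto simp: bij_betw_def)

lemma f_sigma_le: "j \<in> A \<Longrightarrow> r \<in> {1..card A} \<Longrightarrow> rank j \<le> r \<Longrightarrow> f (\<sigma> r) \<le> f j"
  using sorted rank_in sigma_rank by metis

lemma f_le_sigma: "j \<in> A \<Longrightarrow> r \<in> {1..card A} \<Longrightarrow> r \<le> rank j \<Longrightarrow> f j \<le> f (\<sigma> r)"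
  using sorted rank_in sigma_rank by metis

lemma card_rank_le:
  assumes "r \<le> card A"
  shows "card {j\<in>A. rank j \<le> r} = r"
proof -
  have "{j\<in>A. rank j \<le> r} = \<sigma> ` {1..r}"
    using assms rank_in sigma_rank rank_sigma sigma_in by (force simp: image_iff)
  moreover have "inj_on \<sigma> {1..r}"
    using assms bij by (auto simp: bij_betw_def intro: inj_on_subset)
  ultimately show ?thesis by (simp add: card_image)
qed

context
  fixes mm :: nat
  assumes mm_pos: "1 \<le> mm" and mm_less: "mm < card A"
begin

definition real_gap :: "'a \<Rightarrow> real" where
  "real_gap j = (if rank j \<le> mm then f j - f (\<sigma> (mm + 1)) else f (\<sigma> mm) - f j)"

lemma ranked_value_threshold: "ranked_value (card A) f \<sigma> (mm + 1) = ereal (f (\<sigma> (mm + 1)))"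
  using mm_less by (simp add: ranked_value_def)

lemma ranked_gap_eq:
  assumes "j \<in> A"
  shows "ranked_gap (card A) mm f \<sigma> j = ereal (real_gap j)"
proof -
  have "ranked_gap (card A) mm f \<sigma> j = (if rank j \<le> mm
      then ranked_value (card A) f \<sigma> (rank j) - ranked_value (card A) f \<sigma> (mm + 1)
      else ranked_value (card A) f \<sigma> mm - ranked_value (card A) f \<sigma> (rank j))"
    by (simp add: ranked_gap_def rank_def)
  then show ?thesis
    using rank_in[OF assms] mm_pos mm_less
    by (simp add: ranked_value_def real_gap_def sigma_rank[OF assms])
qed

context
  fixes G :: "'a set"
  assumes mm_card: "mm = card (A \<inter> G)"
begin

lemma exists_out_above_threshold: "\<exists>x\<in>A - G. f (\<sigma> (mm + 1)) \<le> f x"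
proof -
  have "card (A \<inter> G) < card {j\<in>A. rank j \<le> mm + 1}"
    using card_rank_le[of "mm + 1"] mm_less mm_card by simp
  then obtain x where "x \<in> A" "rank x \<le> mm + 1" "x \<notin> G"
    using finite_A by (metis (no_types, lifting) IntI card_mono finite_Int mem_Collect_eq not_le subsetI)
  then show ?thesis using f_sigma_le[of x "mm + 1"] mm_less by auto
qed

lemma exists_in_below_threshold: "\<exists>g\<in>A \<inter> G. f g \<le> f (\<sigma> mm)"
proof -
  have top: "card {j\<in>A. rank j \<le> mm - 1} = mm - 1"
    using card_rank_le mm_less by simp
  have "card (A - {j\<in>A. rank j \<le> mm - 1}) = card A - (mm - 1)"
    using finite_A top by (simp add: card_Diff_subset)
  moreover have "card (A - G) = card A - mm"
    using finite_A mm_card by (metis card_Diff_subset_Int finite_Int Diff_Int2 inf.idem)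
  ultimately have "card (A - G) < card (A - {j\<in>A. rank j \<le> mm - 1})"
    using mm_pos mm_less by simp
  then obtain g where g: "g \<in> A" "g \<in> G" and "\<not> rank g \<le> mm - 1"
    using finite_A by (metis (no_types, lifting) DiffI Diff_iff card_mono finite_Diff mem_Collect_eq not_le subsetI)
  then have "mm \<le> rank g" using mm_pos by linarith
  then show ?thesis using g f_le_sigma[of g mm] mm_pos mm_less by auto
qed

lemma misranked_pair:
  assumes "j \<in> A" and "(j \<in> G) \<noteq> (rank j \<le> mm)"
  obtains x g where "x \<in> A - G" "rank x \<le> mm" "g \<in> A \<inter> G" "mm < rank g"
proof -
  have "{j\<in>A. rank j \<le> mm} \<noteq> A \<inter> G"
    using assms by auto
  moreover have "card {j\<in>A. rank j \<le> mm} = card (A \<inter> G)"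
    using card_rank_le mm_less mm_card by simp
  ultimately have "{j\<in>A. rank j \<le> mm} - A \<inter> G \<noteq> {}" "A \<inter> G - {j\<in>A. rank j \<le> mm} \<noteq> {}"
    by (intro card_eq_diffs_nonempty; use finite_A in simp)+
  then obtain x g where "x \<in> {j\<in>A. rank j \<le> mm} - A \<inter> G" "g \<in> A \<inter> G - {j\<in>A. rank j \<le> mm}"
    by blast
  then show ?thesis using that by (auto simp: not_le)
qed

context
  fixes \<mu> :: "'a \<Rightarrow> real" and a b \<delta> :: real
  assumes in_ge: "\<forall>g\<in>A \<inter> G. a \<le> \<mu> g" and out_le: "\<forall>x\<in>A - G. \<mu> x \<le> b" and sep: "b < a"
    and close: "\<forall>j\<in>A. \<bar>f j - \<mu> j\<bar> < \<delta>"
begin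

lemma close_bounds:
  assumes "j \<in> A"
  shows "\<mu> j - \<delta> < f j" and "f j < \<mu> j + \<delta>"
  using close assms by (auto simp: abs_less_iff)

lemma in_lower_bound: "g \<in> A \<inter> G \<Longrightarrow> a - \<delta> < f g"
  using in_ge close_bounds(1)[of g] by force

lemma out_upper_bound: "x \<in> A - G \<Longrightarrow> f x < b + \<delta>"
  using out_le close_bounds(2)[of x] by force

lemma misranked_real_gap_less:
  assumes j: "j \<in> A" and mis: "(j \<in> G) \<noteq> (rank j \<le> mm)"
  shows "real_gap j < 2 * \<delta>"
proof -
  obtain x g where x: "x \<in> A - G" "rank x \<le> mm" and g: "g \<in> A \<inter> G" "mm < rank g"
    using misranked_pair[OF j mis] .
  have hi: "f (\<sigma> mm) < b + \<delta>"
    using f_sigma_le[of x mm] x out_upper_bound[of x] mm_pos mm_less by fastforce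
  have lo: "a - \<delta> < f (\<sigma> (mm + 1))"
    using f_le_sigma[of g "mm + 1"] g in_lower_bound[of g] mm_less by fastforce
  show ?thesis
  proof (cases "rank j \<le> mm")
    case True
    then have "f j < b + \<delta>" using j mis out_upper_bound by simp
    then show ?thesis using True lo sep by (simp add: real_gap_def)
  next
    case False
    then have "a - \<delta> < f j" using j mis in_lower_bound by simp
    then show ?thesis using False hi sep by (simp add: real_gap_def)
  qed
qed

lemma witness_real_gap_greater:
  assumes js: "js \<in> A" and "js \<in> G \<Longrightarrow> b + 4 * \<delta> \<le> \<mu> js" and "js \<notin> G \<Longrightarrow> \<mu> js \<le> a - 4 * \<delta>"
  shows "2 * \<delta> < real_gap js"
proof (cases "js \<in> G")
  case True
  then have big: "b + 3 * \<delta> < f js" using assms close_bounds(1)[OF js] by fastforce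
  have "rank js \<le> mm"
  proof (rule ccontr)
    assume "\<not> rank js \<le> mm"
    then obtain x where x: "x \<in> A - G" "rank x \<le> mm"
      using misranked_pair[OF js] True by metis
    have "f js \<le> f (\<sigma> mm)" using f_le_sigma[OF js] \<open>\<not> rank js \<le> mm\<close> mm_pos mm_less by simp
    also have "\<dots> \<le> f x" using f_sigma_le[of x mm] x mm_pos mm_less by simp
    also have "\<dots> < b + \<delta>" using x out_upper_bound by blast
    finally show False using big close_bounds[OF js] by linarith
  qed
  moreover obtain x where "x \<in> A - G" "f (\<sigma> (mm + 1)) \<le> f x"
    using exists_out_above_threshold by blast
  then have "f (\<sigma> (mm + 1)) < b + \<delta>" using out_upper_bound by fastforce
  ultimately show ?thesis using big by (simp add: real_gap_def)
next
  case False
  then have small: "f js < a - 3 * \<delta>" using assms close_bounds(2)[OF js] by fastforce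
  have "\<not> rank js \<le> mm"
  proof
    assume "rank js \<le> mm"
    then obtain g where g: "g \<in> A \<inter> G" "mm < rank g"
      using misranked_pair[OF js] False by metis
    have "a - \<delta> < f g" using g in_lower_bound by blast
    also have "\<dots> \<le> f (\<sigma> (mm + 1))" using f_le_sigma[of g "mm + 1"] g mm_less by simp
    also have "\<dots> \<le> f js" using f_sigma_le[OF js] \<open>rank js \<le> mm\<close> mm_less by simp
    finally show False using small close_bounds[OF js] by linarith
  qed
  moreover obtain g where "g \<in> A \<inter> G" "f g \<le> f (\<sigma> mm)"
    using exists_in_below_threshold by blast
  then have "a - \<delta> < f (\<sigma> mm)" using in_lower_bound by fastforce
  ultimately show ?thesis using small by (simp add: real_gap_def)
qed

lemma interior_accept_iff_good:
  assumes i: "i \<in> A" and i_max: "\<forall>j\<in>A. ranked_gap (card A) mm f \<sigma> j \<le> ranked_gap (card A) mm f \<sigma> i"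
    and js: "js \<in> A" "js \<in> G \<Longrightarrow> b + 4 * \<delta> \<le> \<mu> js" "js \<notin> G \<Longrightarrow> \<mu> js \<le> a - 4 * \<delta>"
  shows "ranked_value (card A) f \<sigma> (mm + 1) < ereal (f i) \<longleftrightarrow> i \<in> G"
proof -
  have "2 * \<delta> < real_gap js"
    by (rule witness_real_gap_greater[OF js])
  also have "real_gap js \<le> real_gap i"
    using i_max i js by (simp add: ranked_gap_eq)
  finally have gap_i: "2 * \<delta> < real_gap i" .
  then have i_in_iff: "i \<in> G \<longleftrightarrow> rank i \<le> mm"
    using misranked_real_gap_less[OF i] by force
  have "0 < \<delta>" using close_bounds[OF i] by linarith
  show ?thesis
  proof (cases "rank i \<le> mm")
    case True
    then show ?thesis using gap_i \<open>0 < \<delta>\<close> i_in_iff ranked_value_threshold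
      by (simp add: real_gap_def)
  next
    case False
    then show ?thesis using f_le_sigma[OF i, of "mm + 1"] mm_less i_in_iff ranked_value_threshold
      by simp
  qed
qed

end

end

end

lemma accept_iff_good:
  assumes mm: "mm = card (A \<inter> G)"
    and i: "i \<in> A" and i_max: "\<forall>j\<in>A. ranked_gap (card A) mm f \<sigma> j \<le> ranked_gap (card A) mm f \<sigma> i"
    and in_ge: "\<forall>g\<in>A \<inter> G. a \<le> \<mu> g" and out_le: "\<forall>x\<in>A - G. \<mu> x \<le> b" and sep: "b < a"
    and close: "\<forall>j\<in>A. \<bar>f j - \<mu> j\<bar> < \<delta>"
    and js: "js \<in> A" "js \<in> G \<Longrightarrow> b + 4 * \<delta> \<le> \<mu> js" "js \<notin> G \<Longrightarrow> \<mu> js \<le> a - 4 * \<delta>"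
  shows "ranked_value (card A) f \<sigma> (mm + 1) < ereal (f i) \<longleftrightarrow> i \<in> G"
proof -
  have "card A \<noteq> 0" using i finite_A by auto
  then have "1 \<le> card A" by simp
  consider "mm = 0" | "mm = card A" | "1 \<le> mm" "mm < card A"
    using mm finite_A by (metis card_mono inf_le1 le_neq_implies_less less_one not_le)
  then show ?thesis
  proof cases
    case 1
    then have "i \<notin> G" using mm i finite_A by auto
    moreover have "f i \<le> f (\<sigma> 1)" using f_le_sigma[OF i, of 1] rank_in[OF i] \<open>1 \<le> card A\<close> by simp
    ultimately show ?thesis using 1 \<open>1 \<le> card A\<close> by (simp add: ranked_value_def)
  next
    case 2
    then have "A \<inter> G = A" using mm finite_A by (metis card_subset_eq finite_Int inf_le1)
    then show ?thesis using 2 i by (auto simp: ranked_value_def)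
  next
    case 3
    show ?thesis
      by (rule interior_accept_iff_good[OF 3 mm in_ge out_le sep close i i_max js])
  qed
qed

end

section \<open>One phase of SAR\<close>

definition sar_choice :: "'a set \<Rightarrow> nat \<Rightarrow> 'a set \<Rightarrow> ('a \<Rightarrow> real) \<Rightarrow> (nat \<Rightarrow> 'a) \<Rightarrow> 'a
    \<Rightarrow> 'a set \<times> nat \<times> 'a set \<Rightarrow> bool" where
  "sar_choice A mm Acc f \<sigma> i st' \<longleftrightarrow> bij_betw \<sigma> {1..card A} A
     \<and> (\<forall>r\<in>{1..card A}. \<forall>r'\<in>{1..card A}. r \<le> r' \<longrightarrow> f (\<sigma> r') \<le> f (\<sigma> r))
     \<and> i \<in> A \<and> (\<forall>j\<in>A. ranked_gap (card A) mm f \<sigma> j \<le> ranked_gap (card A) mm f \<sigma> i)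
     \<and> st' = (if ranked_value (card A) f \<sigma> (mm + 1) < ereal (f i)
              then (A - {i}, mm - 1, insert i Acc) else (A - {i}, mm, Acc))"

lemma sar_step_iff:
  "sar_step K n X \<omega> k (A, mm, Acc) st' \<longleftrightarrow>
     (\<exists>\<sigma> i. sar_choice A mm Acc (\<lambda>j. emp_mean X \<omega> j (nk K n k)) \<sigma> i st')"
  unfolding sar_step_def sar_choice_def ranked_gap_def ranked_value_def Let_def by simp

lemma sar_choice_deactivates:
  assumes "sar_choice A mm Acc f \<sigma> i st'"
  shows "i \<in> A \<and> (st' = (A - {i}, mm - 1, insert i Acc) \<or> st' = (A - {i}, mm, Acc))"
  using assms unfolding sar_choice_def by auto

lemma sar_choice_correct:
  assumes choice: "sar_choice A mm Acc f \<sigma> i st'" and mm: "mm = card (A \<inter> G)"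
    and in_ge: "\<forall>g\<in>A \<inter> G. a \<le> \<mu> g" and out_le: "\<forall>x\<in>A - G. \<mu> x \<le> b" and sep: "b < a"
    and close: "\<forall>j\<in>A. \<bar>f j - \<mu> j\<bar> < \<delta>"
    and js: "js \<in> A" "js \<in> G \<Longrightarrow> b + 4 * \<delta> \<le> \<mu> js" "js \<notin> G \<Longrightarrow> \<mu> js \<le> a - 4 * \<delta>"
  shows "i \<in> A \<and> st' = (A - {i}, if i \<in> G then mm - 1 else mm, if i \<in> G then insert i Acc else Acc)"
proof -
  interpret sorted_enum A \<sigma> f
    using choice unfolding sar_choice_def by unfold_locales auto
  have i: "i \<in> A" and i_max: "\<forall>j\<in>A. ranked_gap (card A) mm f \<sigma> j \<le> ranked_gap (card A) mm f \<sigma> i"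
    using choice unfolding sar_choice_def by auto
  show ?thesis
    using choice accept_iff_good[OF mm i i_max in_ge out_le sep close js]
    unfolding sar_choice_def by auto
qed

section \<open>Correctness of SAR on accurate estimates\<close>

lemma sort_nth_le_some:
  fixes g :: "'a \<Rightarrow> 'b::linorder"
  assumes "distinct xs" and A: "A \<subseteq> set xs" and p: "p < card A"
  shows "\<exists>j\<in>A. sort (map g xs) ! p \<le> g j"
proof (rule ccontr)
  assume none: "\<not> ?thesis"
  define L where "L = sort (map g xs)"
  then have A_below: "A \<subseteq> {j\<in>set xs. g j < L ! p}"
    using A none by (auto simp: not_le)
  have "card A \<le> card {j\<in>set xs. g j < L ! p}"
    by (rule card_mono[OF _ A_below]) simp
  also have "\<dots> = length (filter (\<lambda>x. x < L ! p) L)"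
    using \<open>distinct xs\<close> by (simp add: L_def filter_sort filter_map o_def distinct_length_filter Collect_conj_eq Int_commute)
  also have "\<dots> = card {i. i < length L \<and> L ! i < L ! p}"
    by (rule length_filter_conv_card)
  also have "\<dots> \<le> card {..<p}"
    using sorted_nth_mono[of L p] by (intro card_mono) (auto simp: L_def not_less[symmetric])
  finally show False using p by simp
qed

definition ordered_gap :: "nat \<Rightarrow> (nat \<Rightarrow> real) \<Rightarrow> nat \<Rightarrow> nat \<Rightarrow> real" where
  "ordered_gap K \<mu> m i = sort (map (gapm \<mu> m) [1..<K+1]) ! (i - 1)"

lemma ordered_gap_le_H2:
  assumes "i \<in> {1..K}"
  shows "real i / (ordered_gap K \<mu> m i)\<^sup>2 \<le> H2 K \<mu> m"
  unfolding H2_def ordered_gap_def using assms by (intro Max_ge) auto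

definition sar_chain :: "nat \<Rightarrow> nat \<Rightarrow> nat \<Rightarrow> (nat \<Rightarrow> nat \<Rightarrow> 'a \<Rightarrow> real) \<Rightarrow> 'a
    \<Rightarrow> (nat \<Rightarrow> nat set \<times> nat \<times> nat set) \<Rightarrow> bool" where
  "sar_chain K m n X \<omega> st \<longleftrightarrow>
     st 1 = ({1..K}, m, {}) \<and> (\<forall>k\<in>{1..K-1}. sar_step K n X \<omega> k (st k) (st (Suc k)))"

definition accepted_set :: "nat set \<times> nat \<times> nat set \<Rightarrow> nat set" where
  "accepted_set st = (case st of (A, mm, Acc) \<Rightarrow> if mm = card A then Acc \<union> A else Acc)"

lemma sar_outputs_eq: "sar_outputs K m n X \<omega> = {accepted_set (st K) | st. sar_chain K m n X \<omega> st}"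
  unfolding sar_outputs_def sar_chain_def accepted_set_def by blast

definition sar_invariant :: "nat \<Rightarrow> nat \<Rightarrow> nat \<Rightarrow> nat set \<times> nat \<times> nat set \<Rightarrow> bool" where
  "sar_invariant K m k st \<longleftrightarrow> (case st of (A, mm, Acc) \<Rightarrow>
     A \<subseteq> {1..K} \<and> card A = K + 1 - k \<and> mm = card (A \<inter> {1..m}) \<and> Acc = {1..m} - A)"

lemma accepted_set_correct:
  assumes "sar_invariant K m K st"
  shows "accepted_set st = {1..m}"
proof -
  obtain A mm Acc where st: "st = (A, mm, Acc)" by (cases st)
  with assms obtain a where "A = {a}" "mm = card (A \<inter> {1..m})" "Acc = {1..m} - A"
    by (auto simp: sar_invariant_def card_1_singleton_iff)
  then show ?thesis by (cases "a \<in> {1..m}") (auto simp: accepted_set_def st)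
qed

locale sorted_arms =
  fixes K m :: nat and \<mu> :: "nat \<Rightarrow> real"
  assumes m_pos: "1 \<le> m" and m_less: "m < K"
    and decreasing: "\<And>i j. i \<in> {1..K} \<Longrightarrow> j \<in> {1..K} \<Longrightarrow> i < j \<Longrightarrow> \<mu> j < \<mu> i"
begin

lemma mean_ge_mean_m: "i \<in> {1..m} \<Longrightarrow> \<mu> m \<le> \<mu> i"
  using decreasing[of i m] m_less by (cases "i = m") auto

lemma mean_le_mean_Suc_m: "i \<in> {m+1..K} \<Longrightarrow> \<mu> i \<le> \<mu> (m + 1)"
  using decreasing[of "m + 1" i] m_pos by (cases "i = m + 1") auto

lemma gapm_pos: "i \<in> {1..K} \<Longrightarrow> 0 < gapm \<mu> m i"
  using decreasing[of i "m + 1"] decreasing[of m i] m_pos m_less by (auto simp: gapm_def)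

lemma ordered_gap_pos:
  assumes "i \<in> {1..K}"
  shows "0 < ordered_gap K \<mu> m i"
proof -
  have "ordered_gap K \<mu> m i \<in> set (sort (map (gapm \<mu> m) [1..<K+1]))"
    unfolding ordered_gap_def using assms by (intro nth_mem) auto
  then have "ordered_gap K \<mu> m i \<in> gapm \<mu> m ` {1..K}"
    by (simp del: upt_Suc add: atLeastLessThanSuc_atLeastAtMost)
  then obtain j where "j \<in> {1..K}" "ordered_gap K \<mu> m i = gapm \<mu> m j"
    by blast
  then show ?thesis using gapm_pos by simp
qed

lemma exists_gapm_ge_ordered_gap:
  assumes "A \<subseteq> {1..K}" and "1 \<le> i" and "i \<le> card A"
  shows "\<exists>j\<in>A. ordered_gap K \<mu> m i \<le> gapm \<mu> m j"
  unfolding ordered_gap_def using assms by (intro sort_nth_le_some) auto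

lemma sar_step_decides_correctly:
  assumes k: "k \<in> {1..K-1}" and inv: "sar_invariant K m k (A, mm, Acc)"
    and step: "sar_step K n X \<omega> k (A, mm, Acc) st'"
    and good: "\<forall>i\<in>{1..K}. \<bar>emp_mean X \<omega> i (nk K n k) - \<mu> i\<bar> < ordered_gap K \<mu> m (K + 1 - k) / 4"
  shows "\<exists>i\<in>A. st' = (A - {i}, if i \<in> {1..m} then mm - 1 else mm,
      if i \<in> {1..m} then insert i Acc else Acc)"
proof -
  have A: "A \<subseteq> {1..K}" "card A = K + 1 - k" and mm: "mm = card (A \<inter> {1..m})"
    using inv by (auto simp: sar_invariant_def)
  define \<delta> where "\<delta> = ordered_gap K \<mu> m (K + 1 - k) / 4"
  obtain \<sigma> i where choice: "sar_choice A mm Acc (\<lambda>j. emp_mean X \<omega> j (nk K n k)) \<sigma> i st'"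
    using step by (auto simp: sar_step_iff)
  have "\<exists>j\<in>A. ordered_gap K \<mu> m (K + 1 - k) \<le> gapm \<mu> m j"
    by (rule exists_gapm_ge_ordered_gap) (use A k in auto)
  then obtain js where js: "js \<in> A" "4 * \<delta> \<le> gapm \<mu> m js"
    by (auto simp: \<delta>_def)
  have "i \<in> A \<and> st' = (A - {i}, if i \<in> {1..m} then mm - 1 else mm,
      if i \<in> {1..m} then insert i Acc else Acc)"
  proof (rule sar_choice_correct[OF choice mm])
    show "\<forall>g\<in>A \<inter> {1..m}. \<mu> m \<le> \<mu> g" using mean_ge_mean_m by blast
    show "\<forall>x\<in>A - {1..m}. \<mu> x \<le> \<mu> (m + 1)" using A mean_le_mean_Suc_m by auto
    show "\<mu> (m + 1) < \<mu> m" using decreasing[of m "m + 1"] m_pos m_less by simp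
    show "\<forall>j\<in>A. \<bar>emp_mean X \<omega> j (nk K n k) - \<mu> j\<bar> < \<delta>" using A good by (auto simp: \<delta>_def)
    show "js \<in> A" by (fact js(1))
    show "js \<in> {1..m} \<Longrightarrow> \<mu> (m + 1) + 4 * \<delta> \<le> \<mu> js"
      and "js \<notin> {1..m} \<Longrightarrow> \<mu> js \<le> \<mu> m - 4 * \<delta>"
      using js A by (auto simp: gapm_def)
  qed
  then show ?thesis by blast
qed

lemma sar_invariant_step:
  assumes k: "k \<in> {1..K-1}" and inv: "sar_invariant K m k st"
    and step: "sar_step K n X \<omega> k st st'"
    and good: "\<forall>i\<in>{1..K}. \<bar>emp_mean X \<omega> i (nk K n k) - \<mu> i\<bar> < ordered_gap K \<mu> m (K + 1 - k) / 4"
  shows "sar_invariant K m (Suc k) st'"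
proof -
  obtain A mm Acc where st: "st = (A, mm, Acc)" by (cases st)
  have A: "A \<subseteq> {1..K}" "card A = K + 1 - k" and mm: "mm = card (A \<inter> {1..m})"
    and Acc: "Acc = {1..m} - A"
    using inv by (auto simp: sar_invariant_def st)
  have "finite A" using A finite_subset by blast
  have "\<exists>i\<in>A. st' = (A - {i}, if i \<in> {1..m} then mm - 1 else mm,
      if i \<in> {1..m} then insert i Acc else Acc)"
    using inv step by (intro sar_step_decides_correctly[OF k _ _ good]) (simp_all add: st)
  then obtain i where i: "i \<in> A" and st': "st' = (A - {i}, if i \<in> {1..m} then mm - 1 else mm,
      if i \<in> {1..m} then insert i Acc else Acc)"
    by (elim bexE)
  have "card (A - {i}) = K + 1 - Suc k" using i A \<open>finite A\<close> by simp
  moreover have "card ((A - {i}) \<inter> {1..m}) = (if i \<in> {1..m} then mm - 1 else mm)"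
  proof -
    have "(A - {i}) \<inter> {1..m} = A \<inter> {1..m} - {i}" by blast
    then show ?thesis using i mm \<open>finite A\<close> by (simp add: card_Diff_singleton_if)
  qed
  ultimately show ?thesis using A Acc i by (auto simp: sar_invariant_def st')
qed

theorem sar_outputs_correct:
  assumes good: "\<forall>k\<in>{1..K-1}. \<forall>i\<in>{1..K}.
      \<bar>emp_mean X \<omega> i (nk K n k) - \<mu> i\<bar> < ordered_gap K \<mu> m (K + 1 - k) / 4"
    and out: "out \<in> sar_outputs K m n X \<omega>"
  shows "out = {1..m}"
proof -
  obtain st where chain: "sar_chain K m n X \<omega> st" and out: "out = accepted_set (st K)"
    using out by (auto simp: sar_outputs_eq)
  have inv: "sar_invariant K m k (st k)" if "k \<in> {1..K}" for k
    using that
  proof (induction k)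
    case (Suc k)
    show ?case
    proof (cases "k = 0")
      case True
      then show ?thesis using chain m_less by (auto simp: sar_chain_def sar_invariant_def)
    next
      case False
      then have k: "k \<in> {1..K-1}" using Suc.prems by auto
      have "sar_invariant K m k (st k)" using Suc False by auto
      moreover have "sar_step K n X \<omega> k (st k) (st (Suc k))"
        using chain k by (simp add: sar_chain_def)
      ultimately show ?thesis
        by (rule sar_invariant_step[OF k]) (use good k in blast)
    qed
  qed simp
  then have "sar_invariant K m K (st K)" using m_less by simp
  then show ?thesis using accepted_set_correct out by simp
qed

end

section \<open>Measurability of the error event\<close>

lemma sar_choice_cong:
  assumes f: "\<And>j. j \<in> A \<Longrightarrow> f j = g j" and \<sigma>: "\<And>r. r \<in> {1..card A} \<Longrightarrow> \<sigma> r = \<tau> r"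
  shows "sar_choice A mm Acc f \<sigma> i st' = sar_choice A mm Acc g \<tau> i st'"
proof (cases "bij_betw \<sigma> {1..card A} A")
  case True
  then have \<sigma>_A: "\<sigma> r \<in> A" if "r \<in> {1..card A}" for r
    using that by (auto simp: bij_betw_def)
  have inv: "inv_into {1..card A} \<sigma> = inv_into {1..card A} \<tau>"
    using \<sigma> by (auto simp: inv_into_def intro!: ext arg_cong[where f=Eps])
  have val: "ranked_value (card A) f \<sigma> = ranked_value (card A) g \<tau>"
    using \<sigma> \<sigma>_A f by (auto simp: ranked_value_def fun_eq_iff)
  have gap: "ranked_gap (card A) mm f \<sigma> = ranked_gap (card A) mm g \<tau>"
    unfolding ranked_gap_def inv val ..
  have bij: "bij_betw \<sigma> {1..card A} A = bij_betw \<tau> {1..card A} A"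
    using \<sigma> by (rule bij_betw_cong)
  show ?thesis
    unfolding sar_choice_def gap bij using \<sigma> \<sigma>_A f val by (auto simp: ranked_value_def)
next
  case False
  then have "\<not> bij_betw \<tau> {1..card A} A"
    using bij_betw_cong[of "{1..card A}" \<sigma> \<tau> A] \<sigma> by blast
  then show ?thesis using False by (simp add: sar_choice_def)
qed

lemma measurable_ranked_value:
  assumes "\<And>j. (\<lambda>\<omega>. F \<omega> j) \<in> borel_measurable M"
  shows "(\<lambda>\<omega>. ranked_value c (F \<omega>) \<sigma> r) \<in> borel_measurable M"
  unfolding ranked_value_def using assms by (cases "r = 0"; cases "c < r") simp_all

lemma measurable_ranked_gap:
  assumes "\<And>j. (\<lambda>\<omega>. F \<omega> j) \<in> borel_measurable M"
  shows "(\<lambda>\<omega>. ranked_gap c mm (F \<omega>) \<sigma> j) \<in> borel_measurable M"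
  unfolding ranked_gap_def Let_def
  by (cases "inv_into {1..c} \<sigma> j \<le> mm")
    (simp_all add: borel_measurable_ereal_diff measurable_ranked_value assms)

lemma pred_sar_choice:
  fixes F :: "'b \<Rightarrow> 'a \<Rightarrow> real"
  assumes [measurable]: "\<And>j. (\<lambda>\<omega>. F \<omega> j) \<in> borel_measurable M" and "finite A"
  shows "Measurable.pred M (\<lambda>\<omega>. sar_choice A mm Acc (F \<omega>) \<sigma> i st')"
proof -
  note [measurable] = measurable_ranked_value[OF assms(1)] measurable_ranked_gap[OF assms(1)]
  show ?thesis
    unfolding sar_choice_def if_split[of "(=) st'"] using \<open>finite A\<close> by measurable
qed

lemma measurable_emp_mean:
  assumes "\<And>t. t \<in> {1..s} \<Longrightarrow> X i t \<in> borel_measurable M"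
  shows "(\<lambda>\<omega>. emp_mean X \<omega> i s) \<in> borel_measurable M"
  unfolding emp_mean_def using assms by (intro borel_measurable_divide borel_measurable_sum) auto

lemma pred_sar_step:
  fixes X :: "nat \<Rightarrow> nat \<Rightarrow> 'b \<Rightarrow> real"
  assumes "finite A" and X: "\<And>j t. j \<in> A \<Longrightarrow> 1 \<le> t \<Longrightarrow> X j t \<in> borel_measurable M"
  shows "Measurable.pred M (\<lambda>\<omega>. sar_step K n X \<omega> k (A, mm, Acc) st')"
proof -
  \<comment> \<open>Only the arms in \<open>A\<close> and the values of \<open>\<sigma>\<close> on \<open>{1..card A}\<close> matter, which makes the choice finite.\<close>
  define F where "F \<omega> j = (if j \<in> A then emp_mean X \<omega> j (nk K n k) else 0)" for \<omega> j
  have F: "(\<lambda>\<omega>. F \<omega> j) \<in> borel_measurable M" for j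
    unfolding F_def using X by (cases "j \<in> A") (auto intro: measurable_emp_mean)
  have cong: "sar_choice A mm Acc (\<lambda>j. emp_mean X \<omega> j (nk K n k)) \<sigma> i st'
      = sar_choice A mm Acc (F \<omega>) \<tau> i st'"
    if "\<And>r. r \<in> {1..card A} \<Longrightarrow> \<sigma> r = \<tau> r" for \<omega> \<sigma> \<tau> i
    by (rule sar_choice_cong) (simp_all add: F_def that)
  have "sar_step K n X \<omega> k (A, mm, Acc) st' \<longleftrightarrow>
      (\<exists>\<sigma>\<in>{1..card A} \<rightarrow>\<^sub>E A. \<exists>i\<in>A. sar_choice A mm Acc (F \<omega>) \<sigma> i st')" for \<omega>
  proof
    assume "sar_step K n X \<omega> k (A, mm, Acc) st'"
    then obtain \<sigma> i where choice: "sar_choice A mm Acc (\<lambda>j. emp_mean X \<omega> j (nk K n k)) \<sigma> i st'"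
      by (auto simp: sar_step_iff)
    then have "restrict \<sigma> {1..card A} \<in> {1..card A} \<rightarrow>\<^sub>E A" "i \<in> A"
      by (auto simp: sar_choice_def bij_betw_def)
    moreover have "sar_choice A mm Acc (F \<omega>) (restrict \<sigma> {1..card A}) i st'"
      using choice cong[of \<sigma> "restrict \<sigma> {1..card A}"] by simp
    ultimately show "\<exists>\<sigma>\<in>{1..card A} \<rightarrow>\<^sub>E A. \<exists>i\<in>A. sar_choice A mm Acc (F \<omega>) \<sigma> i st'"
      by blast
  next
    assume "\<exists>\<sigma>\<in>{1..card A} \<rightarrow>\<^sub>E A. \<exists>i\<in>A. sar_choice A mm Acc (F \<omega>) \<sigma> i st'"
    then show "sar_step K n X \<omega> k (A, mm, Acc) st'"
      using cong by (auto simp: sar_step_iff)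
  qed
  then show ?thesis
    using \<open>finite A\<close> by (simp add: pred_intros_finite finite_PiE pred_sar_choice[OF F])
qed

lemma sar_chain_states:
  assumes chain: "sar_chain K m n X \<omega> st" and k: "k \<in> {1..K}"
  shows "st k \<in> Pow {1..K} \<times> {..m} \<times> Pow {1..K}"
  using k
proof (induction k)
  case (Suc k)
  show ?case
  proof (cases "k = 0")
    case True
    then show ?thesis using chain by (simp add: sar_chain_def)
  next
    case False
    obtain A mm Acc where st: "st k = (A, mm, Acc)" by (cases "st k")
    then have IH: "A \<subseteq> {1..K}" "mm \<le> m" "Acc \<subseteq> {1..K}"
      using Suc False by auto
    have "k \<in> {1..K-1}" using Suc.prems False by auto
    then have "sar_step K n X \<omega> k (A, mm, Acc) (st (Suc k))"
      using chain unfolding sar_chain_def st[symmetric] by blast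
    then obtain \<sigma> i where "sar_choice A mm Acc (\<lambda>j. emp_mean X \<omega> j (nk K n k)) \<sigma> i (st (Suc k))"
      by (auto simp: sar_step_iff)
    from sar_choice_deactivates[OF this] IH show ?thesis
      by (elim conjE disjE) force+
  qed
qed simp

lemma sar_chain_restrict:
  assumes "1 \<le> K"
  shows "sar_chain K m n X \<omega> (restrict st {1..K}) = sar_chain K m n X \<omega> st"
  using assms unfolding sar_chain_def by (intro conj_cong ball_cong) auto

lemma sar_error_event_measurable:
  assumes "1 \<le> K" and X: "\<And>i t. i \<in> {1..K} \<Longrightarrow> 1 \<le> t \<Longrightarrow> X i t \<in> borel_measurable M"
  shows "sar_error_event M K m n X \<in> sets M"
proof -
  \<comment> \<open>Chains only matter on \<open>{1..K}\<close> and stay in a finite state space, so finitely many suffice.\<close>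
  define S where "S = {1..K} \<rightarrow>\<^sub>E Pow {1..K} \<times> {..m} \<times> Pow {1..K}"
  have "finite S" by (simp add: S_def finite_PiE)
  have "(\<exists>out\<in>sar_outputs K m n X \<omega>. out \<noteq> {1..m}) \<longleftrightarrow>
      (\<exists>st\<in>S. sar_chain K m n X \<omega> st \<and> accepted_set (st K) \<noteq> {1..m})" for \<omega>
  proof
    assume "\<exists>out\<in>sar_outputs K m n X \<omega>. out \<noteq> {1..m}"
    then obtain st where "sar_chain K m n X \<omega> st" "accepted_set (st K) \<noteq> {1..m}"
      by (auto simp: sar_outputs_eq)
    moreover have "restrict st {1..K} \<in> S"
      using sar_chain_states[OF \<open>sar_chain K m n X \<omega> st\<close>] by (auto simp: S_def)
    moreover have "restrict st {1..K} K = st K" using assms(1) by simp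
    ultimately show "\<exists>st\<in>S. sar_chain K m n X \<omega> st \<and> accepted_set (st K) \<noteq> {1..m}"
      using sar_chain_restrict[OF assms(1)] by metis
  qed (auto simp: sar_outputs_eq)
  then have event: "sar_error_event M K m n X =
      {\<omega>\<in>space M. \<exists>st\<in>S. sar_chain K m n X \<omega> st \<and> accepted_set (st K) \<noteq> {1..m}}"
    by (simp add: sar_error_event_def)
  have "Measurable.pred M (\<lambda>\<omega>. sar_step K n X \<omega> k (st k) (st (Suc k)))"
    if "st \<in> S" "k \<in> {1..K-1}" for st k
  proof -
    obtain A mm Acc where st: "st k = (A, mm, Acc)" by (cases "st k")
    have "st k \<in> Pow {1..K} \<times> {..m} \<times> Pow {1..K}" using that by (auto simp: S_def PiE_iff)
    then have A: "A \<subseteq> {1..K}" using st by simp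
    then have "finite A" using finite_subset by blast
    moreover have "\<And>j t. j \<in> A \<Longrightarrow> 1 \<le> t \<Longrightarrow> X j t \<in> borel_measurable M"
      using A X by blast
    ultimately show ?thesis unfolding st by (rule pred_sar_step)
  qed
  then have "Measurable.pred M (\<lambda>\<omega>. \<exists>st\<in>S. sar_chain K m n X \<omega> st \<and> accepted_set (st K) \<noteq> {1..m})"
    unfolding sar_chain_def using \<open>finite S\<close> by measurable
  then show ?thesis unfolding event pred_def .
qed

section \<open>Concentration and the error bound\<close>

lemma (in prob_space) emp_mean_deviation_prob:
  fixes X :: "nat \<Rightarrow> nat \<Rightarrow> 'a \<Rightarrow> real" and \<nu> :: "real measure"
  assumes indep: "indep_vars (\<lambda>_. borel) (\<lambda>p. X (fst p) (snd p)) ({i} \<times> {1..s})"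
    and distr: "\<And>t. t \<in> {1..s} \<Longrightarrow> distr M borel (X i t) = \<nu>"
    and range: "AE x in \<nu>. 0 \<le> x \<and> x \<le> 1"
    and mean: "\<mu> = (\<integral>x. x \<partial>\<nu>)"
    and "0 \<le> \<delta>"
  shows "prob {\<omega>\<in>space M. \<delta> \<le> \<bar>emp_mean X \<omega> i s - \<mu>\<bar>} \<le> 2 * exp (-2 * real s * \<delta>\<^sup>2)"
proof (cases "s = 0")
  case True
  have "prob {\<omega>\<in>space M. \<delta> \<le> \<bar>emp_mean X \<omega> i s - \<mu>\<bar>} \<le> 1" by (rule prob_le_1)
  also have "\<dots> \<le> 2 * exp (-2 * real s * \<delta>\<^sup>2)" using True by simp
  finally show ?thesis .
next
  case False
  define I where "I = {i} \<times> {1..s}"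
  have X1: "random_variable borel (X i 1)"
    using indep False unfolding indep_vars_def by (auto dest: bspec[of _ _ "(i, 1)"])
  have distr_X1: "distr M borel (X i 1) = \<nu>"
    using distr False by simp
  have "AE x in distr M borel (X i 1). x \<in> {0..1}"
    unfolding distr_X1 using range by (auto elim!: eventually_mono)
  then have X1_range: "AE \<omega> in M. X i 1 \<omega> \<in> {0..1}"
    using X1 by (simp add: AE_distr_iff)
  have "iid_interval_bounded_random_variables M I (\<lambda>p. X (fst p) (snd p)) (X i 1) 0 1"
  proof (intro iid_interval_bounded_random_variables.intro prob_space_axioms
      iid_interval_bounded_random_variables_axioms.intro)
    show "finite I" by (simp add: I_def)
    show "indep_vars (\<lambda>_. borel) (\<lambda>p. X (fst p) (snd p)) I" using indep by (simp only: I_def)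
    show "distr M borel (X (fst p) (snd p)) = distr M borel (X i 1)" if p: "p \<in> I" for p
    proof -
      obtain t where "p = (i, t)" "t \<in> {1..s}" using p by (auto simp: I_def)
      then show ?thesis using distr[of t] distr_X1 by simp
    qed
  next
    show "random_variable borel (X i 1)" by (fact X1)
    show "AE \<omega> in M. X i 1 \<omega> \<in> {0..1}" by (fact X1_range)
  qed
  then interpret Hoeffding_ineq_iid M I "\<lambda>p. X (fst p) (snd p)" "X i 1" 0 1 "expectation (X i 1)"
    by (simp add: Hoeffding_ineq_iid_def)
  have "expectation (X i 1) = (\<integral>x. x \<partial>distr M borel (X i 1))"
    using X1 by (simp add: integral_distr)
  also have "\<dots> = \<mu>" unfolding distr_X1 mean ..
  finally have mean_X1: "expectation (X i 1) = \<mu>" .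
  have card_I: "card I = s" and "I \<noteq> {}"
    using False by (auto simp: I_def card_cartesian_product)
  have sum_I: "(\<Sum>p\<in>I. X (fst p) (snd p) \<omega>) = (\<Sum>t=1..s. X i t \<omega>)" for \<omega>
  proof -
    have "I = Pair i ` {1..s}" by (auto simp: I_def)
    then show ?thesis by (simp add: sum.reindex inj_on_def)
  qed
  have "prob {\<omega>\<in>space M. \<delta> \<le> \<bar>(\<Sum>p\<in>I. X (fst p) (snd p) \<omega>) / card I - expectation (X i 1)\<bar>}
      \<le> 2 * exp (-2 * real (card I) * \<delta>\<^sup>2 / (1 - 0)\<^sup>2)"
    by (rule Hoeffding_ineq_abs_ge'[OF \<open>0 \<le> \<delta>\<close>]) (use \<open>I \<noteq> {}\<close> in simp_all)
  then show ?thesis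
    unfolding sum_I card_I mean_X1 by (simp add: emp_mean_def)
qed

lemma logbar_pos: "0 < logbar K"
proof -
  have "0 \<le> (\<Sum>i=2..K. 1 / real i)" by (intro sum_nonneg) simp
  then show ?thesis unfolding logbar_def by linarith
qed

lemma nk_lower_bound:
  assumes "k \<noteq> 0" and "K \<le> n"
  shows "(1 / logbar K) * ((real n - real K) / real (K + 1 - k)) \<le> real (nk K n k)"
proof -
  have "0 \<le> (1 / logbar K) * ((real n - real K) / real (K + 1 - k))"
    using assms logbar_pos[of K] by simp
  then show ?thesis using assms by (simp add: nk_def)
qed

lemma hoeffding_exponent_le:
  fixes D H L x c s :: real
  assumes D: "0 < D" and L: "0 < L" and c: "0 < c" and x: "0 \<le> x"
    and H: "c / D\<^sup>2 \<le> H" and s: "(1 / L) * (x / c) \<le> s"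
  shows "-2 * s * (D / 4)\<^sup>2 \<le> - x / (8 * L * H)"
proof -
  have cD: "0 < c / D\<^sup>2" using D c by simp
  have "x / (L * H) \<le> x / (L * (c / D\<^sup>2))"
    using H x L cD by (intro divide_left_mono mult_left_mono mult_pos_pos) auto
  also have "\<dots> = (1 / L) * (x / c) * D\<^sup>2" using D c L by (simp add: field_simps)
  also have "\<dots> \<le> s * D\<^sup>2" using s D by (intro mult_right_mono) auto
  finally have "x / (L * H) \<le> s * D\<^sup>2" .
  then have "x / (8 * L * H) \<le> 2 * s * (D / 4)\<^sup>2"
    by (simp add: power2_eq_square field_simps)
  then show ?thesis by simp
qed

lemma (in prob_space) prob_le_card_mult:
  fixes p :: real
  assumes "E \<subseteq> (\<Union>x\<in>I. B x)" and "finite I"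
    and "\<And>x. x \<in> I \<Longrightarrow> B x \<in> events" and "\<And>x. x \<in> I \<Longrightarrow> prob (B x) \<le> p"
  shows "prob E \<le> card I * p"
proof -
  have "prob E \<le> prob (\<Union>x\<in>I. B x)"
    using assms by (intro finite_measure_mono) auto
  also have "\<dots> \<le> (\<Sum>x\<in>I. prob (B x))"
    using assms by (intro finite_measure_subadditive_finite) auto
  also have "\<dots> \<le> (\<Sum>x\<in>I. p)"
    using assms by (intro sum_mono) auto
  finally show ?thesis by simp
qed

locale sar_bandit = sorted_arms K m \<mu> + prob_space M
  for K m :: nat and \<mu> :: "nat \<Rightarrow> real" and M :: "'a measure" +
  fixes \<nu> :: "nat \<Rightarrow> real measure" and X :: "nat \<Rightarrow> nat \<Rightarrow> 'a \<Rightarrow> real" and n :: nat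
  assumes budget: "K \<le> n"
    and range: "\<And>i. i \<in> {1..K} \<Longrightarrow> AE x in \<nu> i. 0 \<le> x \<and> x \<le> 1"
    and mean: "\<And>i. i \<in> {1..K} \<Longrightarrow> \<mu> i = (\<integral>x. x \<partial>\<nu> i)"
    and indep: "indep_vars (\<lambda>_. borel) (\<lambda>p. X (fst p) (snd p)) ({1..K} \<times> {1..})"
    and distr: "\<And>i s. i \<in> {1..K} \<Longrightarrow> 1 \<le> s \<Longrightarrow> distr M borel (X i s) = \<nu> i"
begin

lemma measurable_X: "i \<in> {1..K} \<Longrightarrow> 1 \<le> t \<Longrightarrow> X i t \<in> borel_measurable M"
  using indep unfolding indep_vars_def by auto

lemma phase_deviation_prob:
  assumes k: "k \<in> {1..K-1}" and i: "i \<in> {1..K}"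
  shows "prob {\<omega>\<in>space M. ordered_gap K \<mu> m (K + 1 - k) / 4 \<le> \<bar>emp_mean X \<omega> i (nk K n k) - \<mu> i\<bar>}
    \<le> 2 * exp (- (real n - real K) / (8 * logbar K * H2 K \<mu> m))"
proof -
  define D where "D = ordered_gap K \<mu> m (K + 1 - k)"
  have D_pos: "0 < D" unfolding D_def using k by (intro ordered_gap_pos) auto
  have "prob {\<omega>\<in>space M. D / 4 \<le> \<bar>emp_mean X \<omega> i (nk K n k) - \<mu> i\<bar>}
      \<le> 2 * exp (-2 * real (nk K n k) * (D / 4)\<^sup>2)"
  proof (rule emp_mean_deviation_prob)
    show "indep_vars (\<lambda>_. borel) (\<lambda>p. X (fst p) (snd p)) ({i} \<times> {1..nk K n k})"
      using i by (intro indep_vars_subset[OF indep]) auto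
  qed (use i D_pos distr range mean in auto)
  also have "\<dots> \<le> 2 * exp (- (real n - real K) / (8 * logbar K * H2 K \<mu> m))"
  proof -
    have "K + 1 - k \<in> {1..K}" using k by auto
    then have H: "real (K + 1 - k) / D\<^sup>2 \<le> H2 K \<mu> m"
      unfolding D_def by (rule ordered_gap_le_H2)
    have "-2 * real (nk K n k) * (D / 4)\<^sup>2 \<le> - (real n - real K) / (8 * logbar K * H2 K \<mu> m)"
      by (rule hoeffding_exponent_le[OF D_pos logbar_pos _ _ H nk_lower_bound])
        (use k budget in auto)
    then show ?thesis by simp
  qed
  finally show ?thesis by (simp add: D_def)
qed

theorem sar_error_prob_le:
  shows "sar_error_event M K m n X \<in> events"
    and "prob (sar_error_event M K m n X)
      \<le> 2 * (real K)\<^sup>2 * exp (- (real n - real K) / (8 * logbar K * H2 K \<mu> m))"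
proof -
  show "sar_error_event M K m n X \<in> events"
    using m_less measurable_X by (intro sar_error_event_measurable) auto
  define B where "B = (\<lambda>(k, i). {\<omega>\<in>space M.
      ordered_gap K \<mu> m (K + 1 - k) / 4 \<le> \<bar>emp_mean X \<omega> i (nk K n k) - \<mu> i\<bar>})"
  define T where "T = exp (- (real n - real K) / (8 * logbar K * H2 K \<mu> m))"
  have "sar_error_event M K m n X \<subseteq> (\<Union>p\<in>{1..K-1} \<times> {1..K}. B p)"
    using sar_outputs_correct by (fastforce simp: sar_error_event_def B_def not_le)
  moreover have "B (k, i) \<in> events" if "i \<in> {1..K}" for k i
  proof -
    have [measurable]: "(\<lambda>\<omega>. emp_mean X \<omega> i (nk K n k)) \<in> borel_measurable M"
      using that by (intro measurable_emp_mean measurable_X) auto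
    show ?thesis unfolding B_def case_prod_conv by measurable
  qed
  ultimately have "prob (sar_error_event M K m n X) \<le> card ({1..K-1} \<times> {1..K}) * (2 * T)"
    using phase_deviation_prob by (intro prob_le_card_mult) (auto simp: B_def T_def)
  also have "\<dots> \<le> real (K * K) * (2 * T)"
    by (intro mult_right_mono of_nat_mono) (auto simp: card_cartesian_product T_def)
  also have "\<dots> = 2 * (real K)\<^sup>2 * T"
    by (simp add: power2_eq_square)
  finally show "prob (sar_error_event M K m n X) \<le> 2 * (real K)\<^sup>2 * T" .
qed

end

theorem theorem1:
  fixes M :: "'a measure" and \<nu> :: "nat \<Rightarrow> real measure"
    and X :: "nat \<Rightarrow> nat \<Rightarrow> 'a \<Rightarrow> real" and \<mu> :: "nat \<Rightarrow> real" and K n m :: nat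
  assumes "prob_space M"
    and "K \<ge> 2" and "n \<ge> K" and "1 \<le> m" and "m \<le> K - 1"
    and "\<And>i. i \<in> {1..K} \<Longrightarrow> prob_space (\<nu> i)"
    and "\<And>i. i \<in> {1..K} \<Longrightarrow> sets (\<nu> i) = sets borel"
    and "\<And>i. i \<in> {1..K} \<Longrightarrow> (AE x in \<nu> i. 0 \<le> x \<and> x \<le> 1)"
    and "\<And>i. i \<in> {1..K} \<Longrightarrow> \<mu> i = (\<integral>x. x \<partial>\<nu> i)"
    and "\<And>i j. i \<in> {1..K} \<Longrightarrow> j \<in> {1..K} \<Longrightarrow> i < j \<Longrightarrow> \<mu> j < \<mu> i"
    and "prob_space.indep_vars M (\<lambda>_. borel) (\<lambda>p. X (fst p) (snd p)) ({1..K} \<times> {1..})"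
    and "\<And>i s. i \<in> {1..K} \<Longrightarrow> 1 \<le> s \<Longrightarrow> distr M borel (X i s) = \<nu> i"
  shows "sar_error_event M K m n X \<in> sets M
       \<and> measure M (sar_error_event M K m n X)
           \<le> 2 * (real K)\<^sup>2 * exp (- (real n - real K) / (8 * logbar K * H2 K \<mu> m))"
proof -
  \<comment> \<open>Unused: each \<open>\<nu> i\<close> is a Borel probability measure, being the law of \<open>X i 1\<close>.\<close>
  have "sorted_arms K m \<mu>"
    using assms(2,4,5,10) by unfold_locales auto
  then interpret sar_bandit K m \<mu> M \<nu> X n
    using assms(1,3,8,9,11,12) by (simp add: sar_bandit_def sar_bandit_axioms_def)
  show ?thesis using sar_error_prob_le by simp
qed

end
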